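(* Let $R$ be a ring with unity, let $a,b,c,d\in R$ with $a$ and $d$ both left $(b,c)$-invertible. Let $x$ be any left $(b,c)$-inverse of $a$ and $y$ any left $(b,c)$-inverse of $d$. Then (1) $ydx$ is a left $(b,c)$-inverse of $a$; (2) $xay$ is a left $(b,c)$-inverse of $d$.
   Context: For $u,b,c\in R$, $u$ is left $(b,c)$-invertible if there exists $x\in Rc$ with $xub=b$; any such $x$ is a left $(b,c)$-inverse of $u$, denoted $u_l^{(b,c)}$ (not necessarily unique). *)

theory Defs
  imports Main
begin

definition left_bc_inverse :: "'a::ring_1 \<Rightarrow> 'a \<Rightarrow> 'a \<Rightarrow> 'a \<Rightarrow> bool" where
  "left_bc_inverse x u b c \<longleftrightarrow> (\<exists>r. x = r * c) \<and> x * u * b = b"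

definition left_bc_invertible :: "'a::ring_1 \<Rightarrow> 'a \<Rightarrow> 'a \<Rightarrow> bool" where
  "left_bc_invertible u b c \<longleftrightarrow> (\<exists>x. left_bc_inverse x u b c)"

end

theory Submission
  imports Defs
begin

lemma left_bc_inverse_mult_left:
  assumes "left_bc_inverse x u b c" and "z * b = b"
  shows "left_bc_inverse (z * x) u b c"
proof -
  obtain r where "x = r * c" and "x * u * b = b"
    using assms(1) unfolding left_bc_inverse_def by blast
  then have "z * x = (z * r) * c" and "z * x * u * b = b"
    using assms(2) by (simp_all add: mult.assoc)
  then show ?thesis
    unfolding left_bc_inverse_def by blast
qed

lemma left_bc_inverse_fixes_b:
  assumes "left_bc_inverse x u b c"
  shows "x * u * b = b"
  using assms unfolding left_bc_inverse_def by blast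

theorem theorem3p17:
  fixes a b c d x y :: "'a::ring_1"
  assumes "left_bc_invertible a b c" and "left_bc_invertible d b c"
    and "left_bc_inverse x a b c" and "left_bc_inverse y d b c"
  shows "left_bc_inverse (y * d * x) a b c \<and> left_bc_inverse (x * a * y) d b c"
proof
  show "left_bc_inverse (y * d * x) a b c"
    using left_bc_inverse_mult_left[OF assms(3) left_bc_inverse_fixes_b[OF assms(4)]] .
  show "left_bc_inverse (x * a * y) d b c"
    using left_bc_inverse_mult_left[OF assms(4) left_bc_inverse_fixes_b[OF assms(3)]] .
qed

end
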